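(* Let $r\ge1$ be an integer, $P\in\Pi_r^d$, $\mathbf{x}\in\mathbb{S}^d$, $\delta\in(0,2]$. Then $$\|P\|_\infty\le\left(\frac4\delta\right)^{2r}\|P\|_{\infty,\mathbb{B}(\mathbf{x},\delta)}.$$
   Context: $\mathbb{S}^d$ is the unit sphere of $\mathbb{R}^{d+1}$, $\mathbb{B}(\mathbf{x},\delta)=\{\mathbf{y}\in\mathbb{S}^d:|\mathbf{x}-\mathbf{y}|_{d+1}\le\delta\}$ with $|\cdot|_{d+1}$ the Euclidean norm; $\Pi_r^d$ is the space of restrictions to $\mathbb{S}^d$ of algebraic polynomials in $d+1$ variables of total degree $<r$; $\|P\|_\infty=\sup_{\mathbb{S}^d}|P|$ and $\|P\|_{\infty,B}=\sup_B|P|$. *)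

theory Defs
  imports "HOL-Analysis.Analysis"
begin

text \<open>Real polynomials in the coordinates of \<open>real^'n\<close> (here \<open>CARD('n) = d+1\<close>)
  of total degree \<open>< r\<close>, written out as finite sums of monomials.
  The space \<open>\<Pi>_r^d\<close> consists of the restrictions of such functions to the unit sphere.\<close>
definition poly_deg_lt :: "nat \<Rightarrow> (real^'n \<Rightarrow> real) \<Rightarrow> bool" where
  "poly_deg_lt r P \<longleftrightarrow>
     (\<exists>c :: ('n \<Rightarrow> nat) \<Rightarrow> real.
        finite {\<alpha>. c \<alpha> \<noteq> 0} \<and>
        (\<forall>\<alpha>. c \<alpha> \<noteq> 0 \<longrightarrow> (\<Sum>i\<in>UNIV. \<alpha> i) < r) \<and>
        (\<forall>x. P x = (\<Sum>\<alpha>\<in>{\<alpha>. c \<alpha> \<noteq> 0}. c \<alpha> * (\<Prod>i\<in>UNIV. (x $ i) ^ \<alpha> i))))"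

definition sph_cap :: "real^'n \<Rightarrow> real \<Rightarrow> (real^'n) set" where
  "sph_cap x \<delta> = {y \<in> sphere 0 1. norm (x - y) \<le> \<delta>}"

end

theory Submission
  imports Defs "HOL-Computational_Algebra.Polynomial"
begin

text \<open>Write \<open>y = a x + b u\<close> on the great circle through \<open>x\<close> and \<open>y\<close>, with \<open>u \<perp> x\<close>. On that circle
  \<open>P\<close> takes the form \<open>A(a) + b B(a)\<close> with \<open>deg A \<le> r - 1\<close> and \<open>deg B \<le> r - 2\<close>, so the even part
  \<open>P(a x + b u)\<^sup>2 + P(a x - b u)\<^sup>2 = 2 (A(a)\<^sup>2 + (1 - a\<^sup>2) B(a)\<^sup>2)\<close> is a polynomial of degree
  \<open>\<le> 2r - 2\<close> in \<open>a\<close> alone. It is at most \<open>2M\<^sup>2\<close> on the arc \<open>a \<ge> 1 - \<delta>\<^sup>2/2\<close>, which lies in the cap,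
  and Chebyshev's inequality extends this bound to all \<open>a \<in> [-1, 1]\<close> at the cost of a factor
  \<open>(16/\<delta>\<^sup>2)\<^bsup>2r-2\<^esup>\<close>.\<close>

section \<open>Chebyshev's inequality\<close>

fun cheb_poly :: "nat \<Rightarrow> real poly" where
  "cheb_poly 0 = 1"
| "cheb_poly (Suc 0) = [:0, 1:]"
| "cheb_poly (Suc (Suc k)) = [:0, 2:] * cheb_poly (Suc k) - cheb_poly k"

lemma degree_cheb_poly_le: "degree (cheb_poly k) \<le> k"
proof (induction k rule: cheb_poly.induct)
  case (3 k)
  have "degree ([:0, 2:] * cheb_poly (Suc k)) \<le> Suc (Suc k)"
    by (rule order.trans[OF degree_mult_le]) (use 3 in simp)
  moreover have "degree (cheb_poly k) \<le> Suc (Suc k)" using 3 by simp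
  ultimately show ?case by (simp add: degree_diff_le)
qed simp_all

lemma poly_cheb_poly_cos: "poly (cheb_poly k) (cos t) = cos (real k * t)"
proof (induction k rule: cheb_poly.induct)
  case (3 k)
  have "cos ((real k + 2) * t) = cos ((real k + 1) * t + t)"
    by (simp add: algebra_simps)
  moreover have "cos (real k * t) = cos ((real k + 1) * t - t)"
    by (simp add: algebra_simps)
  ultimately have "cos ((real k + 2) * t) = 2 * cos t * cos ((real k + 1) * t) - cos (real k * t)"
    unfolding cos_add cos_diff by simp
  then show ?case using 3 by (simp add: algebra_simps)
qed simp_all

lemma poly_cheb_poly_ge_one_mono:
  fixes y :: real
  assumes "1 \<le> y"
  shows "0 \<le> poly (cheb_poly k) y \<and> poly (cheb_poly k) y \<le> poly (cheb_poly (Suc k)) y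
    \<and> poly (cheb_poly (Suc k)) y \<le> 2 * y * poly (cheb_poly k) y"
proof (induction k)
  case 0
  then show ?case using assms by simp
next
  case (Suc k)
  let ?T = "\<lambda>k. poly (cheb_poly k) y"
  have "0 \<le> (2 * y - 2) * ?T (Suc k)"
    using Suc assms by (intro mult_nonneg_nonneg) auto
  moreover have "?T (Suc (Suc k)) = 2 * y * ?T (Suc k) - ?T k" by simp
  ultimately show ?case using Suc by (simp add: algebra_simps)
qed

lemma poly_cheb_poly_le_power:
  fixes y :: real
  assumes "1 \<le> y"
  shows "poly (cheb_poly k) y \<le> (2 * y) ^ k"
proof (induction k)
  case (Suc k)
  have "poly (cheb_poly (Suc k)) y \<le> 2 * y * poly (cheb_poly k) y"
    using poly_cheb_poly_ge_one_mono[OF assms] by blast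
  also have "\<dots> \<le> (2 * y) ^ Suc k"
    using Suc assms by (simp add: mult_left_mono)
  finally show ?case .
qed simp

definition lagrange_basis :: "(nat \<Rightarrow> 'a::field) \<Rightarrow> nat \<Rightarrow> nat \<Rightarrow> 'a \<Rightarrow> 'a" where
  "lagrange_basis \<eta> m j y = (\<Prod>i\<in>{..m}-{j}. (y - \<eta> i) / (\<eta> j - \<eta> i))"

lemma lagrange_basis_at_node:
  assumes "inj_on \<eta> {..m}" "j \<le> m" "k \<le> m"
  shows "lagrange_basis \<eta> m j (\<eta> k) = (if j = k then 1 else 0)"
proof (cases "j = k")
  case True
  have "(\<Prod>i\<in>{..m}-{j}. (\<eta> k - \<eta> i) / (\<eta> j - \<eta> i)) = 1"
    using True assms by (intro prod.neutral) (auto simp: inj_on_def)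
  then show ?thesis using True unfolding lagrange_basis_def by simp
next
  case False
  have "(\<Prod>i\<in>{..m}-{j}. (\<eta> k - \<eta> i) / (\<eta> j - \<eta> i)) = 0"
    using False assms by (intro prod_zero) auto
  then show ?thesis using False unfolding lagrange_basis_def by simp
qed

lemma lagrange_interpolation:
  fixes p :: "'a::field poly"
  assumes inj: "inj_on \<eta> {..m}" and deg: "degree p \<le> m"
  shows "poly p y = (\<Sum>j\<le>m. poly p (\<eta> j) * lagrange_basis \<eta> m j y)"
proof -
  define L where "L = (\<Sum>j\<le>m. smult (poly p (\<eta> j) / (\<Prod>i\<in>{..m}-{j}. \<eta> j - \<eta> i))
                     (\<Prod>i\<in>{..m}-{j}. [:- \<eta> i, 1:]))"
  have poly_L: "poly L z = (\<Sum>j\<le>m. poly p (\<eta> j) * lagrange_basis \<eta> m j z)" for z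
    unfolding L_def lagrange_basis_def poly_sum poly_smult poly_prod
    by (intro sum.cong refl) (simp add: prod_dividef)
  have "degree L \<le> m"
    unfolding L_def
  proof (intro degree_sum_le)
    fix j assume "j \<in> {..m}"
    then have "degree (\<Prod>i\<in>{..m}-{j}. [:- \<eta> i, 1:]) \<le> m"
      using degree_prod_sum_le[of "{..m}-{j}" "\<lambda>i. [:- \<eta> i, 1:]"] by simp
    then show "degree (smult (poly p (\<eta> j) / (\<Prod>i\<in>{..m}-{j}. \<eta> j - \<eta> i))
                 (\<Prod>i\<in>{..m}-{j}. [:- \<eta> i, 1:])) \<le> m"
      by (rule order.trans[OF degree_smult_le])
  qed simp
  moreover have "card (\<eta> ` {..m}) = Suc m"
    using inj by (simp add: card_image)
  moreover have "poly p (\<eta> k) = poly L (\<eta> k)" if "k \<le> m" for k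
  proof -
    have "poly L (\<eta> k) = (\<Sum>j\<le>m. if j = k then poly p (\<eta> j) else 0)"
      unfolding poly_L using that by (intro sum.cong) (simp_all add: lagrange_basis_at_node[OF inj])
    then show ?thesis using that by simp
  qed
  ultimately have "p = L"
    using deg by (intro poly_eqI_degree[of "\<eta> ` {..m}"]) auto
  then show ?thesis by (subst (1) \<open>p = L\<close>) (rule poly_L)
qed

lemma lagrange_basis_sign:
  fixes \<eta> :: "nat \<Rightarrow> 'a::linordered_field"
  assumes dec: "\<And>i j. i < j \<Longrightarrow> j \<le> m \<Longrightarrow> \<eta> j < \<eta> i"
    and above: "\<And>i. i \<le> m \<Longrightarrow> \<eta> i \<le> y" and j: "j \<le> m"
  shows "0 \<le> (-1) ^ j * lagrange_basis \<eta> m j y"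
proof -
  define f where "f i = (y - \<eta> i) / (\<eta> j - \<eta> i)" for i
  have split: "{..m}-{j} = {..<j} \<union> {j<..m}" using j by auto
  have "lagrange_basis \<eta> m j y = prod f {..<j} * prod f {j<..m}"
    unfolding lagrange_basis_def f_def[symmetric] split by (rule prod.union_disjoint) auto
  moreover have "prod f {..<j} = (-1) ^ j * (\<Prod>i<j. - f i)"
    by (simp add: prod_uminus)
  ultimately have "(-1) ^ j * lagrange_basis \<eta> m j y = (\<Prod>i<j. - f i) * prod f {j<..m}"
    by (simp flip: power_add mult.assoc add: power_mult_distrib[symmetric])
  moreover have "0 \<le> (\<Prod>i<j. - f i)"
  proof (intro prod_nonneg)
    fix i assume "i \<in> {..<j}"
    then show "0 \<le> - f i"
      using dec[of i j] above[of i] j unfolding f_def neg_0_le_iff_le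
      by (intro divide_nonneg_neg) auto
  qed
  moreover have "0 \<le> prod f {j<..m}"
  proof (intro prod_nonneg)
    fix i assume "i \<in> {j<..m}"
    then show "0 \<le> f i"
      using dec[of j i] above[of i] unfolding f_def by (intro divide_nonneg_pos) auto
  qed
  ultimately show ?thesis by simp
qed

text \<open>Interpolate at the extremal points \<open>cos (j\<pi>/m)\<close> of \<open>T\<^sub>m\<close>: outside \<open>[-1, 1]\<close> the
  Lagrange basis polynomials alternate in sign exactly like the values \<open>T\<^sub>m(cos (j\<pi>/m)) = (-1)\<^sup>j\<close>,
  so \<open>\<Sum>\<^sub>j |\<ell>\<^sub>j(y)| = T\<^sub>m(y)\<close>.\<close>
lemma chebyshev_inequality:
  fixes p :: "real poly"
  assumes deg: "degree p \<le> m" and bound: "\<And>t. -1 \<le> t \<Longrightarrow> t \<le> 1 \<Longrightarrow> \<bar>poly p t\<bar> \<le> K"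
    and y: "1 \<le> y"
  shows "\<bar>poly p y\<bar> \<le> K * poly (cheb_poly m) y"
proof (cases "m = 0")
  case True
  then obtain c where "p = [:c:]" using deg by (auto elim: degree_eq_zeroE)
  then show ?thesis using True bound[of 1] by simp
next
  case False
  define \<eta> where "\<eta> j = cos (real j * pi / real m)" for j
  have dec: "\<eta> j < \<eta> i" if "i < j" "j \<le> m" for i j
    unfolding \<eta>_def using that False
    by (intro cos_monotone_0_pi) (auto simp: field_simps)
  then have inj: "inj_on \<eta> {..m}"
    by (metis atMost_iff inj_onI less_irrefl nat_neq_iff)
  have node_le: "\<eta> i \<le> y" for i
    unfolding \<eta>_def using y by (meson cos_le_one order.trans)
  have cheb_node: "poly (cheb_poly m) (\<eta> j) = (-1) ^ j" for j
    unfolding \<eta>_def poly_cheb_poly_cos using False by simp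
  have "\<bar>poly p y\<bar> \<le> (\<Sum>j\<le>m. \<bar>poly p (\<eta> j) * lagrange_basis \<eta> m j y\<bar>)"
    by (subst lagrange_interpolation[OF inj deg]) (rule sum_abs)
  also have "\<dots> \<le> (\<Sum>j\<le>m. K * ((-1) ^ j * lagrange_basis \<eta> m j y))"
  proof (intro sum_mono)
    fix j assume j: "j \<in> {..m}"
    have "\<bar>poly p (\<eta> j)\<bar> \<le> K" unfolding \<eta>_def by (intro bound) simp_all
    moreover have "\<bar>lagrange_basis \<eta> m j y\<bar> = (-1) ^ j * lagrange_basis \<eta> m j y"
      using abs_of_nonneg[OF lagrange_basis_sign[where \<eta> = \<eta> and m = m and y = y and j = j]]
        dec node_le j
      by (simp add: abs_mult power_abs)
    ultimately show "\<bar>poly p (\<eta> j) * lagrange_basis \<eta> m j y\<bar> \<le> K * ((-1) ^ j * lagrange_basis \<eta> m j y)"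
      by (simp add: abs_mult mult_right_mono)
  qed
  also have "\<dots> = K * poly (cheb_poly m) y"
    by (subst lagrange_interpolation[OF inj degree_cheb_poly_le]) (simp add: cheb_node sum_distrib_left)
  finally show ?thesis .
qed

lemma chebyshev_inequality_interval:
  fixes p :: "real poly"
  assumes deg: "degree p \<le> m" and "\<alpha> < \<beta>"
    and bound: "\<And>s. \<alpha> \<le> s \<Longrightarrow> s \<le> \<beta> \<Longrightarrow> \<bar>poly p s\<bar> \<le> K" and "t \<le> \<alpha>"
  shows "\<bar>poly p t\<bar> \<le> K * (4 * (\<beta> - t) / (\<beta> - \<alpha>)) ^ m"
proof -
  define h where "h = (\<beta> - \<alpha>) / 2"
  define c where "c = (\<alpha> + \<beta>) / 2"
  have h: "0 < h" unfolding h_def using \<open>\<alpha> < \<beta>\<close> by simp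
  define q where "q = pcompose p [:c, -h:]"
  have poly_q: "poly q s = poly p (c - h * s)" for s
    unfolding q_def poly_pcompose by (simp add: algebra_simps)
  have "degree q \<le> m"
    unfolding q_def using deg h degree_pcompose_le[of p "[:c, -h:]"] by simp
  moreover have "\<bar>poly q s\<bar> \<le> K" if "-1 \<le> s" "s \<le> 1" for s
  proof -
    have "h * s \<le> h" "- h \<le> h * s"
      using that h mult_left_mono[of s 1 h] mult_left_mono[of "-1" s h] by simp_all
    moreover have "c - h = \<alpha>" "c + h = \<beta>" unfolding c_def h_def by (simp_all add: field_simps)
    ultimately show ?thesis unfolding poly_q by (intro bound) linarith+
  qed
  moreover have s: "(c - t) / h = (\<alpha> + \<beta> - 2 * t) / (\<beta> - \<alpha>)"
    unfolding c_def h_def using \<open>\<alpha> < \<beta>\<close> by (simp add: field_simps)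
  moreover have one_le_s: "1 \<le> (\<alpha> + \<beta> - 2 * t) / (\<beta> - \<alpha>)"
    using \<open>t \<le> \<alpha>\<close> \<open>\<alpha> < \<beta>\<close> by simp
  ultimately have "\<bar>poly q ((c - t) / h)\<bar> \<le> K * poly (cheb_poly m) ((c - t) / h)"
    by (intro chebyshev_inequality) simp_all
  also have "\<dots> \<le> K * (2 * ((\<alpha> + \<beta> - 2 * t) / (\<beta> - \<alpha>))) ^ m"
    unfolding s using bound[of \<alpha>] \<open>\<alpha> < \<beta>\<close> one_le_s
    by (intro mult_left_mono poly_cheb_poly_le_power) auto
  also have "\<dots> \<le> K * (4 * (\<beta> - t) / (\<beta> - \<alpha>)) ^ m"
    using bound[of \<alpha>] \<open>\<alpha> < \<beta>\<close> one_le_s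
    by (intro mult_left_mono power_mono) (auto simp: divide_right_mono)
  finally show ?thesis using h by (simp add: poly_q)
qed

section \<open>Polynomials on the unit circle\<close>

text \<open>Functions that agree on the unit circle \<open>a\<^sup>2 + b\<^sup>2 = 1\<close> with \<open>A(a) + b B(a)\<close>, where
  \<open>deg A \<le> k\<close> and \<open>deg B < k\<close> (expressed as \<open>deg (x B) \<le> k\<close>, which also admits \<open>B = 0\<close>):
  these are exactly the restrictions to the circle of bivariate polynomials of degree \<open>\<le> k\<close>.\<close>
definition circle_poly :: "nat \<Rightarrow> (real \<Rightarrow> real \<Rightarrow> real) \<Rightarrow> bool" where
  "circle_poly k f \<longleftrightarrow> (\<exists>A B. degree A \<le> k \<and> degree (pCons 0 B) \<le> k \<and>
      (\<forall>a b. a\<^sup>2 + b\<^sup>2 = 1 \<longrightarrow> f a b = poly A a + b * poly B a))"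

lemma circle_poly_const: "circle_poly 0 (\<lambda>a b. c)"
  unfolding circle_poly_def by (intro exI[of _ "[:c:]"] exI[of _ 0]) simp

lemma circle_poly_linear: "circle_poly 1 (\<lambda>a b. a * p + b * q)"
  unfolding circle_poly_def by (intro exI[of _ "[:0, p:]"] exI[of _ "[:q:]"]) (simp add: algebra_simps)

lemma circle_poly_mono: "circle_poly k f \<Longrightarrow> k \<le> l \<Longrightarrow> circle_poly l f"
  unfolding circle_poly_def by (meson order.trans)

lemma circle_poly_reflect:
  assumes "circle_poly k f"
  shows "circle_poly k (\<lambda>a b. f a (- b))"
proof -
  obtain A B where "degree A \<le> k" "degree (pCons 0 B) \<le> k"
      and f: "\<forall>a b. a\<^sup>2 + b\<^sup>2 = 1 \<longrightarrow> f a b = poly A a + b * poly B a"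
    using assms unfolding circle_poly_def by blast
  moreover have "degree (pCons 0 (- B)) \<le> k"
    using \<open>degree (pCons 0 B) \<le> k\<close> by (simp split: if_splits)
  moreover have "\<forall>a b. a\<^sup>2 + b\<^sup>2 = 1 \<longrightarrow> f a (- b) = poly A a + b * poly (- B) a"
    using f by simp
  ultimately show ?thesis unfolding circle_poly_def by blast
qed

lemma circle_poly_add:
  assumes "circle_poly k f" "circle_poly k g"
  shows "circle_poly k (\<lambda>a b. f a b + g a b)"
proof -
  obtain A1 B1 A2 B2 where h1: "degree A1 \<le> k" "degree (pCons 0 B1) \<le> k"
      "\<forall>a b. a\<^sup>2 + b\<^sup>2 = 1 \<longrightarrow> f a b = poly A1 a + b * poly B1 a"
    and h2: "degree A2 \<le> k" "degree (pCons 0 B2) \<le> k"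
      "\<forall>a b. a\<^sup>2 + b\<^sup>2 = 1 \<longrightarrow> g a b = poly A2 a + b * poly B2 a"
    using assms unfolding circle_poly_def by blast
  have "degree (A1 + A2) \<le> k" "degree (pCons 0 (B1 + B2)) \<le> k"
    using degree_add_le[OF h1(1) h2(1)] degree_add_le[OF h1(2) h2(2)] by simp_all
  moreover have "\<forall>a b. a\<^sup>2 + b\<^sup>2 = 1 \<longrightarrow> f a b + g a b = poly (A1 + A2) a + b * poly (B1 + B2) a"
    using h1(3) h2(3) by (simp add: algebra_simps)
  ultimately show ?thesis unfolding circle_poly_def by blast
qed

lemma degree_one_minus_square_mult_le:
  assumes "degree (pCons 0 B1) \<le> k" "degree (pCons 0 B2) \<le> l"
  shows "degree ([:1, 0, -1:] * (B1 * B2)) \<le> k + l"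
proof (cases "B1 = 0 \<or> B2 = 0")
  case False
  then have "degree B1 + 1 \<le> k" "degree B2 + 1 \<le> l" using assms by auto
  moreover have "degree ([:1, 0, -1:] * (B1 * B2)) \<le> 2 + (degree B1 + degree B2)"
    by (intro order.trans[OF degree_mult_le] add_mono order.trans[OF degree_mult_le]) auto
  ultimately show ?thesis by linarith
qed auto

text \<open>On the circle \<open>b\<^sup>2 = 1 - a\<^sup>2\<close>, so
  \<open>(A\<^sub>1 + b B\<^sub>1)(A\<^sub>2 + b B\<^sub>2) = (A\<^sub>1A\<^sub>2 + (1 - a\<^sup>2) B\<^sub>1B\<^sub>2) + b (A\<^sub>1B\<^sub>2 + A\<^sub>2B\<^sub>1)\<close>.\<close>
lemma circle_poly_mult:
  assumes "circle_poly k f" "circle_poly l g"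
  shows "circle_poly (k + l) (\<lambda>a b. f a b * g a b)"
proof -
  obtain A1 B1 A2 B2 where h1: "degree A1 \<le> k" "degree (pCons 0 B1) \<le> k"
      "\<forall>a b. a\<^sup>2 + b\<^sup>2 = 1 \<longrightarrow> f a b = poly A1 a + b * poly B1 a"
    and h2: "degree A2 \<le> l" "degree (pCons 0 B2) \<le> l"
      "\<forall>a b. a\<^sup>2 + b\<^sup>2 = 1 \<longrightarrow> g a b = poly A2 a + b * poly B2 a"
    using assms unfolding circle_poly_def by blast
  define A where "A = A1 * A2 + [:1, 0, -1:] * (B1 * B2)"
  define B where "B = A1 * B2 + A2 * B1"
  have "degree (A1 * A2) \<le> k + l"
    using h1 h2 by (intro order.trans[OF degree_mult_le]) auto
  then have "degree A \<le> k + l"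
    unfolding A_def by (rule degree_add_le[OF _ degree_one_minus_square_mult_le[OF h1(2) h2(2)]])
  moreover have "degree (pCons 0 B) \<le> k + l"
  proof -
    have "degree (A1 * pCons 0 B2) \<le> k + l" "degree (A2 * pCons 0 B1) \<le> k + l"
      using h1 h2 by (intro order.trans[OF degree_mult_le]; simp)+
    moreover have "pCons 0 B = A1 * pCons 0 B2 + A2 * pCons 0 B1" unfolding B_def by simp
    ultimately show ?thesis by (metis degree_add_le)
  qed
  moreover have "f a b * g a b = poly A a + b * poly B a" if "a\<^sup>2 + b\<^sup>2 = 1" for a b
  proof -
    have bb: "b * b = 1 - a * a" using that by (simp add: power2_eq_square algebra_simps)
    have "f a b * g a b = (poly A1 a + b * poly B1 a) * (poly A2 a + b * poly B2 a)"
      using h1(3) h2(3) that by simp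
    also have "\<dots> = poly A1 a * poly A2 a + (b * b) * (poly B1 a * poly B2 a)
        + b * (poly A1 a * poly B2 a + poly A2 a * poly B1 a)"
      by (simp add: algebra_simps)
    also have "\<dots> = poly A a + b * poly B a"
      unfolding A_def B_def bb by (simp add: algebra_simps)
    finally show ?thesis .
  qed
  ultimately show ?thesis unfolding circle_poly_def by blast
qed

lemma circle_poly_power: "circle_poly k f \<Longrightarrow> circle_poly (j * k) (\<lambda>a b. f a b ^ j)"
proof (induction j)
  case 0
  then show ?case using circle_poly_const[of 1] by simp
next
  case (Suc j)
  then show ?case using circle_poly_mult[of k f "j * k"] by simp
qed

lemma circle_poly_prod:
  "finite I \<Longrightarrow> (\<And>i. i \<in> I \<Longrightarrow> circle_poly (k i) (f i))
    \<Longrightarrow> circle_poly (\<Sum>i\<in>I. k i) (\<lambda>a b. \<Prod>i\<in>I. f i a b)"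
proof (induction I rule: finite_induct)
  case empty
  then show ?case using circle_poly_const[of 1] by simp
next
  case (insert i I)
  then show ?case using circle_poly_mult[of "k i" "f i" "\<Sum>i\<in>I. k i"] by simp
qed

lemma circle_poly_sum:
  "finite I \<Longrightarrow> (\<And>i. i \<in> I \<Longrightarrow> circle_poly k (f i)) \<Longrightarrow> circle_poly k (\<lambda>a b. \<Sum>i\<in>I. f i a b)"
proof (induction I rule: finite_induct)
  case empty
  then show ?case using circle_poly_mono[OF circle_poly_const[of 0]] by simp
next
  case (insert i I)
  then show ?case using circle_poly_add[of k "f i"] by simp
qed

lemma circle_poly_even:
  assumes "circle_poly k f" and even: "\<And>a b. a\<^sup>2 + b\<^sup>2 = 1 \<Longrightarrow> f a (- b) = f a b"
  obtains S where "degree S \<le> k" "\<And>a b. a\<^sup>2 + b\<^sup>2 = 1 \<Longrightarrow> f a b = poly S a"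
proof -
  obtain A B where "degree A \<le> k" and f: "\<forall>a b. a\<^sup>2 + b\<^sup>2 = 1 \<longrightarrow> f a b = poly A a + b * poly B a"
    using assms(1) unfolding circle_poly_def by blast
  moreover have "f a b = poly A a" if "a\<^sup>2 + b\<^sup>2 = 1" for a b
    using f even[OF that] that by force
  ultimately show ?thesis using that by blast
qed

lemma circle_poly_restrict:
  fixes P :: "real^'n \<Rightarrow> real" and x u :: "real^'n"
  assumes "poly_deg_lt r P"
  shows "circle_poly (r - 1) (\<lambda>a b. P (a *\<^sub>R x + b *\<^sub>R u))"
proof -
  obtain c :: "('n \<Rightarrow> nat) \<Rightarrow> real" where fin: "finite {\<alpha>. c \<alpha> \<noteq> 0}"
    and deg: "\<forall>\<alpha>. c \<alpha> \<noteq> 0 \<longrightarrow> (\<Sum>i\<in>UNIV. \<alpha> i) < r"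
    and P: "\<forall>x. P x = (\<Sum>\<alpha>\<in>{\<alpha>. c \<alpha> \<noteq> 0}. c \<alpha> * (\<Prod>i\<in>UNIV. (x $ i) ^ \<alpha> i))"
    using assms unfolding poly_deg_lt_def by blast
  have "circle_poly (r - 1)
      (\<lambda>a b. \<Sum>\<alpha>\<in>{\<alpha>. c \<alpha> \<noteq> 0}. c \<alpha> * (\<Prod>i\<in>UNIV. (a * x $ i + b * u $ i) ^ \<alpha> i))"
  proof (intro circle_poly_sum[OF fin])
    fix \<alpha> assume "\<alpha> \<in> {\<alpha>. c \<alpha> \<noteq> 0}"
    then have "(\<Sum>i\<in>UNIV. \<alpha> i) \<le> r - 1" using deg by force
    moreover have "circle_poly (0 + (\<Sum>i\<in>UNIV. \<alpha> i * 1))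
        (\<lambda>a b. c \<alpha> * (\<Prod>i\<in>UNIV. (a * x $ i + b * u $ i) ^ \<alpha> i))"
      by (intro circle_poly_mult circle_poly_const circle_poly_prod circle_poly_power
          circle_poly_linear) simp
    ultimately show "circle_poly (r - 1) (\<lambda>a b. c \<alpha> * (\<Prod>i\<in>UNIV. (a * x $ i + b * u $ i) ^ \<alpha> i))"
      using circle_poly_mono by simp
  qed
  then show ?thesis by (simp add: P)
qed

text \<open>\<open>G(a,b) = F(a,b)\<^sup>2 + F(a,-b)\<^sup>2\<close> is even in \<open>b\<close>, hence a polynomial of degree \<open>\<le> 2n\<close> in \<open>a\<close> alone,
  bounded by \<open>2M\<^sup>2\<close> on the arc; Chebyshev's inequality carries this bound to all of \<open>[-1, 1]\<close>.\<close>
lemma circle_poly_bound_from_arc: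
  assumes F: "circle_poly n F" and "-1 \<le> \<alpha>" "\<alpha> < 1"
    and arc: "\<And>t s. t\<^sup>2 + s\<^sup>2 = 1 \<Longrightarrow> \<alpha> \<le> t \<Longrightarrow> \<bar>F t s\<bar> \<le> M"
    and ab: "a\<^sup>2 + b\<^sup>2 = 1"
  shows "\<bar>F a b\<bar> \<le> (8 / (1 - \<alpha>)) ^ Suc n * M"
proof -
  define Q where "Q = 8 / (1 - \<alpha>)"
  have Q: "4 \<le> Q" unfolding Q_def using assms(2,3) by (simp add: field_simps)
  have M: "0 \<le> M" using arc[of 1 0] \<open>\<alpha> < 1\<close> by force
  consider "\<alpha> \<le> a" | "a < \<alpha>" by linarith
  then show ?thesis
  proof cases
    case 1
    then have "\<bar>F a b\<bar> \<le> M" using arc ab by blast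
    also have "\<dots> \<le> Q ^ Suc n * M"
      using mult_right_mono[OF one_le_power[of Q "Suc n"] M] Q by simp
    finally show ?thesis unfolding Q_def .
  next
    case 2
    define G where "G a b = F a b ^ 2 + F a (- b) ^ 2" for a b
    have "circle_poly (2 * n) G"
      unfolding G_def by (intro circle_poly_add circle_poly_power circle_poly_reflect F)
    moreover have "G a (- b) = G a b" for a b unfolding G_def by simp
    ultimately obtain S where deg_S: "degree S \<le> 2 * n"
      and S: "\<And>a b. a\<^sup>2 + b\<^sup>2 = 1 \<Longrightarrow> G a b = poly S a"
      by (rule circle_poly_even) auto
    have F_sq: "F t s ^ 2 \<le> M\<^sup>2" if "t\<^sup>2 + s\<^sup>2 = 1" "\<alpha> \<le> t" for t s
      using arc[OF that] M by (simp add: abs_le_square_iff[symmetric])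
    have "\<bar>poly S t\<bar> \<le> 2 * M\<^sup>2" if "\<alpha> \<le> t" "t \<le> 1" for t
    proof -
      define s where "s = sqrt (1 - t\<^sup>2)"
      have "t\<^sup>2 \<le> 1" using that \<open>-1 \<le> \<alpha>\<close> by (simp add: abs_square_le_1)
      then have circle: "t\<^sup>2 + s\<^sup>2 = 1" "t\<^sup>2 + (- s)\<^sup>2 = 1" unfolding s_def by simp_all
      then have "poly S t = F t s ^ 2 + F t (- s) ^ 2" using S unfolding G_def by simp
      moreover have "F t s ^ 2 + F t (- s) ^ 2 \<le> 2 * M\<^sup>2"
        using F_sq[OF circle(1) that(1)] F_sq[OF circle(2) that(1)] by simp
      ultimately show ?thesis by simp
    qed
    then have "\<bar>poly S a\<bar> \<le> 2 * M\<^sup>2 * (4 * (1 - a) / (1 - \<alpha>)) ^ (2 * n)"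
      using 2 \<open>\<alpha> < 1\<close> by (intro chebyshev_inequality_interval[OF deg_S]) auto
    also have "\<dots> \<le> 2 * M\<^sup>2 * Q ^ (2 * n)"
    proof -
      have "a\<^sup>2 \<le> 1" using ab by (metis le_add_same_cancel1 zero_le_power2)
      then have "-1 \<le> a" by (simp add: abs_square_le_1)
      then show ?thesis
        using 2 \<open>\<alpha> < 1\<close> unfolding Q_def
        by (intro mult_left_mono power_mono divide_right_mono) auto
    qed
    also have "\<dots> \<le> (Q ^ Suc n * M)\<^sup>2"
    proof -
      have "2 \<le> Q\<^sup>2" using Q power_mono[OF Q, of 2] by simp
      then have "2 * (M\<^sup>2 * Q ^ (2 * n)) \<le> Q\<^sup>2 * (M\<^sup>2 * Q ^ (2 * n))"
        by (intro mult_right_mono) simp_all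
      then show ?thesis by (simp add: power_mult_distrib power_mult power2_eq_square algebra_simps)
    qed
    finally have "\<bar>poly S a\<bar> \<le> (Q ^ Suc n * M)\<^sup>2" .
    moreover have "(F a b)\<^sup>2 \<le> poly S a"
      using S[OF ab] zero_le_power2[of "F a (- b)"] unfolding G_def by linarith
    ultimately have "(F a b)\<^sup>2 \<le> (Q ^ Suc n * M)\<^sup>2" by linarith
    then have "\<bar>F a b\<bar> \<le> \<bar>Q ^ Suc n * M\<bar>" by (simp only: abs_le_square_iff)
    also have "\<dots> = Q ^ Suc n * M" using M Q by simp
    finally show ?thesis unfolding Q_def .
  qed
qed

section \<open>Restriction to a great circle\<close>

lemma great_circle_point:
  fixes x u :: "real^'n"
  assumes "norm x = 1" "norm u = 1" "x \<bullet> u = 0" "a\<^sup>2 + b\<^sup>2 = 1"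
  shows "norm (a *\<^sub>R x + b *\<^sub>R u) = 1" "(norm (x - (a *\<^sub>R x + b *\<^sub>R u)))\<^sup>2 = 2 - 2 * a"
proof -
  have "x \<bullet> x = 1" "u \<bullet> u = 1" "u \<bullet> x = 0"
    using assms(1-3) by (simp_all add: dot_square_norm inner_commute)
  then have "(norm (a *\<^sub>R x + b *\<^sub>R u))\<^sup>2 = 1" "(norm (x - (a *\<^sub>R x + b *\<^sub>R u)))\<^sup>2 = 2 - 2 * a"
    using assms(3,4) unfolding power2_norm_eq_inner
    by (simp_all add: inner_add_left inner_add_right inner_diff_left inner_diff_right
        power2_eq_square algebra_simps)
  then show "norm (a *\<^sub>R x + b *\<^sub>R u) = 1" "(norm (x - (a *\<^sub>R x + b *\<^sub>R u)))\<^sup>2 = 2 - 2 * a"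
    using norm_ge_zero[of "a *\<^sub>R x + b *\<^sub>R u"] by (auto simp: power2_eq_1_iff)
qed

text \<open>For \<open>y = \<plusminus>x\<close> any unit vector orthogonal to \<open>x\<close> will do; one exists since \<open>CARD('n) \<ge> 2\<close>.\<close>
lemma great_circle_through:
  fixes x y :: "real^'n"
  assumes "CARD('n) \<ge> 2" "norm x = 1" "norm y = 1"
  obtains u a b where "norm u = 1" "x \<bullet> u = 0" "a\<^sup>2 + b\<^sup>2 = 1" "y = a *\<^sub>R x + b *\<^sub>R u"
proof -
  define a where "a = x \<bullet> y"
  define w where "w = y - a *\<^sub>R x"
  have "x \<bullet> x = 1" using assms(2) by (simp add: dot_square_norm)
  then have xw: "x \<bullet> w = 0" unfolding w_def a_def by (simp add: inner_diff_right)
  obtain u where u: "norm u = 1" "x \<bullet> u = 0" and w: "w = norm w *\<^sub>R u"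
  proof (cases "w = 0")
    case True
    obtain v where "v \<noteq> 0" "orthogonal x v"
      using orthogonal_to_vector_exists[of x] assms(1) by auto
    then show ?thesis
      using True by (intro that[of "v /\<^sub>R norm v"]) (simp_all add: orthogonal_def)
  next
    case False
    then show ?thesis using xw by (intro that[of "w /\<^sub>R norm w"]) simp_all
  qed
  have y: "y = a *\<^sub>R x + w" unfolding w_def by simp
  then have "(norm y)\<^sup>2 = a\<^sup>2 + (norm w)\<^sup>2"
    using xw assms(2) by (simp add: norm_add_Pythagorean orthogonal_def)
  then have "a\<^sup>2 + (norm w)\<^sup>2 = 1" using assms(3) by simp
  then show ?thesis using that u y w by metis
qed

lemma poly_deg_lt_continuous_on:
  assumes "poly_deg_lt r (P :: real^'n \<Rightarrow> real)"
  shows "continuous_on S P"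
proof -
  obtain c :: "('n \<Rightarrow> nat) \<Rightarrow> real" where
    "\<forall>x. P x = (\<Sum>\<alpha>\<in>{\<alpha>. c \<alpha> \<noteq> 0}. c \<alpha> * (\<Prod>i\<in>UNIV. (x $ i) ^ \<alpha> i))"
    using assms unfolding poly_deg_lt_def by blast
  then have "P = (\<lambda>x. \<Sum>\<alpha>\<in>{\<alpha>. c \<alpha> \<noteq> 0}. c \<alpha> * (\<Prod>i\<in>UNIV. (x $ i) ^ \<alpha> i))"
    by auto
  then show ?thesis by (simp add: continuous_intros)
qed

lemma abs_le_on_sphere_if_le_on_cap:
  fixes P :: "real^'n \<Rightarrow> real"
  assumes "CARD('n) \<ge> 2" "poly_deg_lt (Suc n) P" "norm x = 1" "norm y = 1" "0 < \<delta>" "\<delta> \<le> 2"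
    and cap: "\<And>z. z \<in> sph_cap x \<delta> \<Longrightarrow> \<bar>P z\<bar> \<le> M"
  shows "\<bar>P y\<bar> \<le> (16 / \<delta>\<^sup>2) ^ Suc n * M"
proof -
  obtain u a b where u: "norm u = 1" "x \<bullet> u = 0" and ab: "a\<^sup>2 + b\<^sup>2 = 1"
    and y: "y = a *\<^sub>R x + b *\<^sub>R u"
    using great_circle_through[OF assms(1,3,4)] .
  have "circle_poly n (\<lambda>a b. P (a *\<^sub>R x + b *\<^sub>R u))"
    using circle_poly_restrict[OF assms(2), of x u] by simp
  moreover have "-1 \<le> 1 - \<delta>\<^sup>2 / 2"
    using power_mono[OF \<open>\<delta> \<le> 2\<close>, of 2] \<open>0 < \<delta>\<close> by simp
  moreover have "1 - \<delta>\<^sup>2 / 2 < 1" using \<open>0 < \<delta>\<close> by simp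
  moreover have "\<bar>P (t *\<^sub>R x + s *\<^sub>R u)\<bar> \<le> M" if "t\<^sup>2 + s\<^sup>2 = 1" "1 - \<delta>\<^sup>2 / 2 \<le> t" for t s
  proof (rule cap)
    have "(norm (x - (t *\<^sub>R x + s *\<^sub>R u)))\<^sup>2 \<le> \<delta>\<^sup>2"
      using great_circle_point(2)[OF assms(3) u that(1)] that(2) by simp
    then have "norm (x - (t *\<^sub>R x + s *\<^sub>R u)) \<le> \<delta>"
      by (rule power2_le_imp_le[OF _ less_imp_le[OF \<open>0 < \<delta>\<close>]])
    then show "t *\<^sub>R x + s *\<^sub>R u \<in> sph_cap x \<delta>"
      unfolding sph_cap_def using great_circle_point(1)[OF assms(3) u that(1)] by simp
  qed
  ultimately have "\<bar>P (a *\<^sub>R x + b *\<^sub>R u)\<bar> \<le> (8 / (1 - (1 - \<delta>\<^sup>2 / 2))) ^ Suc n * M"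
    by (rule circle_poly_bound_from_arc[OF _ _ _ _ ab])
  then show ?thesis using y by simp
qed

theorem lemma7p3:
  fixes P :: "real^'n \<Rightarrow> real" and x :: "real^'n" and r :: nat and \<delta> :: real
  assumes "CARD('n) \<ge> 2"
    and "r \<ge> 1"
    and "poly_deg_lt r P"
    and "x \<in> sphere 0 1"
    and "0 < \<delta>" and "\<delta> \<le> 2"
  shows "(SUP y\<in>sphere 0 1. \<bar>P y\<bar>) \<le> (4 / \<delta>) ^ (2 * r) * (SUP y\<in>sph_cap x \<delta>. \<bar>P y\<bar>)"
proof -
  define M where "M = (SUP y\<in>sph_cap x \<delta>. \<bar>P y\<bar>)"
  have "sph_cap x \<delta> = sphere 0 1 \<inter> cball x \<delta>"
    unfolding sph_cap_def by (auto simp: dist_norm)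
  then have "compact (sph_cap x \<delta>)" by auto
  then have "bdd_above ((\<lambda>y. \<bar>P y\<bar>) ` sph_cap x \<delta>)"
    by (intro bounded_imp_bdd_above compact_imp_bounded compact_continuous_image
        continuous_intros poly_deg_lt_continuous_on[OF assms(3)])
  then have cap: "\<bar>P z\<bar> \<le> M" if "z \<in> sph_cap x \<delta>" for z
    unfolding M_def using that by (rule cSUP_upper2) simp
  have "r = Suc (r - 1)" using assms(2) by simp
  then have "\<bar>P y\<bar> \<le> (4 / \<delta>) ^ (2 * r) * M" if "y \<in> sphere 0 1" for y
    using abs_le_on_sphere_if_le_on_cap[of "r - 1" P x y \<delta> M] assms that cap
    by (simp add: power_mult power_divide)
  then show ?thesis unfolding M_def using assms(4) by (intro cSUP_least) auto
qed

end
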